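(* Let $k\ge 1$, let $n_0,n_1,\dots,n_k$ be positive integers, $n^{*}=n_0+\cdots+n_k$, and $\sigma_0,\dots,\sigma_k>0$. Let $h:[0,\infty)\to[0,\infty)$ be such that $$\prod_{i=0}^{k}\sigma_i^{-n_i}\,h\!\left(\sum_{i=0}^{k}\sigma_i^{-2}\|\mathbf{x}_i\|^{2}\right)$$ is a probability density on $\mathbb{R}^{n^{*}}$, and let $(\mathbf{x}_0',\dots,\mathbf{x}_k')'$, $\mathbf{x}_i\in\mathbb{R}^{n_i}$, have this density. Let $s_0=\|\mathbf{x}_0\|^2$ and $f_i=\|\mathbf{x}_i\|^2/s_0$ for $i=1,\dots,k$. Then $(s_0,f_1,\dots,f_k)$ has density on $(0,\infty)^{k+1}$ $$\frac{\pi^{n^{*}/2}\,s_0^{n^{*}/2-1}}{\prod_{i=0}^{k}\left(\sigma_i^{n_i}\Gamma[n_i/2]\right)}\prod_{i=1}^{k}f_i^{n_i/2-1}\;h\!\left(s_0\sigma_0^{-2}\Big(1+\sigma_0^{2}\sum_{i=1}^{k}\sigma_i^{-2}f_i\Big)\right).$$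
   Context: $\|\cdot\|$ denotes the Euclidean norm. The resulting law is called the multivariate generalised gamma–beta type II distribution. *)

theory Defs
  imports "HOL-Probability.Probability"
begin

text \<open>Coordinates of R^{n*}: the vector x = (x_0',...,x_k')' is a function on the
finite index set of pairs (i,j) with i \<le> k and j < n i; x (i,j) is the j-th
coordinate of the block x_i \<in> R^{n_i}.\<close>

definition idx :: "nat \<Rightarrow> (nat \<Rightarrow> nat) \<Rightarrow> (nat \<times> nat) set" where
  "idx k n = {(i, j). i \<le> k \<and> j < n i}"

definition sqnorm :: "(nat \<Rightarrow> nat) \<Rightarrow> (nat \<times> nat \<Rightarrow> real) \<Rightarrow> nat \<Rightarrow> real" where
  "sqnorm n x i = (\<Sum>j<n i. (x (i, j))\<^sup>2)"

definition nstar :: "nat \<Rightarrow> (nat \<Rightarrow> nat) \<Rightarrow> nat" where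
  "nstar k n = (\<Sum>i\<le>k. n i)"

definition ggb_density ::
  "nat \<Rightarrow> (nat \<Rightarrow> nat) \<Rightarrow> (nat \<Rightarrow> real) \<Rightarrow> (real \<Rightarrow> real) \<Rightarrow> (nat \<times> nat \<Rightarrow> real) \<Rightarrow> real" where
  "ggb_density k n \<sigma> h x =
     (\<Prod>i\<le>k. inverse (\<sigma> i ^ n i)) * h (\<Sum>i\<le>k. inverse ((\<sigma> i)\<^sup>2) * sqnorm n x i)"

definition ggb_transformed_density ::
  "nat \<Rightarrow> (nat \<Rightarrow> nat) \<Rightarrow> (nat \<Rightarrow> real) \<Rightarrow> (real \<Rightarrow> real) \<Rightarrow> (nat \<Rightarrow> real) \<Rightarrow> real" where
  "ggb_transformed_density k n \<sigma> h y =
     (if (\<forall>i\<le>k. y i > 0) then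
        pi powr (real (nstar k n) / 2) * y 0 powr (real (nstar k n) / 2 - 1)
        / (\<Prod>i\<le>k. \<sigma> i ^ n i * Gamma (real (n i) / 2))
        * (\<Prod>i\<in>{1..k}. y i powr (real (n i) / 2 - 1))
        * h (y 0 * inverse ((\<sigma> 0)\<^sup>2) * (1 + (\<sigma> 0)\<^sup>2 * (\<Sum>i\<in>{1..k}. inverse ((\<sigma> i)\<^sup>2) * y i)))
      else 0)"

end

theory Submission
  imports Defs
begin

text \<open>Write r_i = |x_i|^2. The image of Lebesgue measure on R^m under z \<mapsto> |z|^2 has density
  pi^(m/2) / Gamma(m/2) * t^(m/2 - 1) on (0, \<infinity>), because its distribution function is the
  volume of the ball of radius sqrt t. The blocks x_i are independent coordinates of Lebesgue
  measure on R^(n*), and the joint density depends on x only through r = (r_0, ..., r_k); hence r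
  has density prod_i pi^(n_i/2) / Gamma(n_i/2) * r_i^(n_i/2 - 1) times the joint density. The
  substitution r_0 = s_0, r_i = s_0 f_i has Jacobian s_0^k, and collecting the powers of s_0
  gives the stated density.\<close>

section \<open>Squared norms of Lebesgue vectors\<close>

definition radial_density :: "nat \<Rightarrow> real \<Rightarrow> ennreal" where
  "radial_density m t =
     ennreal (pi powr (real m / 2) / Gamma (real m / 2) * t powr (real m / 2 - 1)) * indicator {0<..} t"

lemma radial_density_measurable [measurable]: "radial_density m \<in> borel_measurable borel"
  unfolding radial_density_def by measurable

lemma sigma_finite_density_radial_density: "sigma_finite_measure (density lborel (radial_density m))"
  by (subst sigma_finite_measure.sigma_finite_iff_density_finite[OF sigma_finite_lborel])
     (auto simp: radial_density_def indicator_def)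

lemma emeasure_density_radial_density_atMost:
  assumes "m > 0"
  shows "emeasure (density lborel (radial_density m)) {..b} =
         ennreal (if b > 0 then unit_ball_vol (real m) * b powr (real m / 2) else 0)"
proof (cases "b > 0")
  case False
  have "emeasure (density lborel (radial_density m)) {..b} =
        (\<integral>\<^sup>+t. radial_density m t * indicator {..b} t \<partial>lborel)"
    by (simp add: emeasure_density)
  also have "\<dots> = (\<integral>\<^sup>+(t::real). 0 \<partial>lborel)"
    using False by (intro nn_integral_cong) (auto simp: radial_density_def indicator_def)
  finally show ?thesis using False by simp
next
  case True
  define c where "c = pi powr (real m / 2) / Gamma (real m / 2)"
  have "c \<ge> 0"
    unfolding c_def using assms by (auto intro!: divide_nonneg_pos)
  have "((\<lambda>t. t powr (real m / 2 - 1)) has_integral (b powr (real m / 2) / (real m / 2))) {0..b}"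
    using has_integral_powr_from_0[of "real m / 2 - 1" b] assms True by simp
  then have int: "((\<lambda>t. c * t powr (real m / 2 - 1)) has_integral
                   (c * (b powr (real m / 2) / (real m / 2)))) {0..b}"
    by (rule has_integral_mult_right)
  have "emeasure (density lborel (radial_density m)) {..b} =
        (\<integral>\<^sup>+t. radial_density m t * indicator {..b} t \<partial>lborel)"
    by (simp add: emeasure_density)
  also have "\<dots> = (\<integral>\<^sup>+t. ennreal (c * t powr (real m / 2 - 1)) * indicator {0..b} t \<partial>lborel)"
    by (intro nn_integral_cong_AE AE_I[of _ _ "{0}"])
       (auto simp: radial_density_def c_def indicator_def)
  also have "\<dots> = ennreal (c * (b powr (real m / 2) / (real m / 2)))"
    by (rule nn_integral_has_integral_lebesgue'[OF _ int]) (use \<open>c \<ge> 0\<close> in auto)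
  also have "c * (b powr (real m / 2) / (real m / 2)) = unit_ball_vol (real m) * b powr (real m / 2)"
  proof -
    have Gamma_succ: "Gamma (real m / 2 + 1) = real m / 2 * Gamma (real m / 2)"
      using assms by (intro Gamma_plus1) auto
    have "Gamma (real m / 2) > 0"
      using assms by (intro Gamma_real_pos) auto
    then show ?thesis
      using assms unfolding c_def unit_ball_vol_def Gamma_succ by (simp add: field_simps)
  qed
  finally show ?thesis using True by simp
qed

lemma emeasure_PiM_lborel_sum_squares_atMost:
  assumes "finite B" "B \<noteq> {}"
  shows "emeasure (PiM B (\<lambda>_. lborel)) {z \<in> space (PiM B (\<lambda>_. lborel)). (\<Sum>p\<in>B. (z p)\<^sup>2) \<le> b} =
         ennreal (if b > 0 then unit_ball_vol (real (card B)) * b powr (real (card B) / 2) else 0)"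
proof (cases "b > 0")
  case True
  have "{z. (\<Sum>p\<in>B. (z p)\<^sup>2) \<le> b} = {z. sqrt (\<Sum>p\<in>B. (z p)\<^sup>2) \<le> sqrt b}"
    by auto
  moreover have "sqrt b ^ card B = b powr (real (card B) / 2)"
    using True by (simp add: powr_half_sqrt[symmetric] powr_realpow[symmetric] powr_powr)
  ultimately show ?thesis
    using True emeasure_cball_aux[OF assms(1), of "sqrt b"] by (simp add: Collect_conj_eq Int_commute)
next
  case False
  interpret product_sigma_finite "\<lambda>_. lborel :: real measure" by standard
  obtain p0 where "p0 \<in> B" using assms by blast
  have "{z \<in> space (PiM B (\<lambda>_. lborel)). (\<Sum>p\<in>B. (z p)\<^sup>2) \<le> b} \<subseteq>
        (\<Pi>\<^sub>E p\<in>B. if p = p0 then {0::real} else UNIV)"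
  proof
    fix z assume "z \<in> {z \<in> space (PiM B (\<lambda>_. lborel)). (\<Sum>p\<in>B. (z p)\<^sup>2) \<le> b}"
    then have z: "z \<in> space (PiM B (\<lambda>_. lborel))" "(\<Sum>p\<in>B. (z p)\<^sup>2) \<le> b"
      by auto
    then have "(\<Sum>p\<in>B. (z p)\<^sup>2) = 0"
      using False by (intro antisym sum_nonneg) auto
    then have "z p0 = 0"
      using assms \<open>p0 \<in> B\<close> by (simp add: sum_nonneg_eq_0_iff)
    then show "z \<in> (\<Pi>\<^sub>E p\<in>B. if p = p0 then {0} else UNIV)"
      using z by (auto simp: space_PiM PiE_iff)
  qed
  then have "emeasure (PiM B (\<lambda>_. lborel)) {z \<in> space (PiM B (\<lambda>_. lborel)). (\<Sum>p\<in>B. (z p)\<^sup>2) \<le> b}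
        \<le> emeasure (PiM B (\<lambda>_. lborel)) (\<Pi>\<^sub>E p\<in>B. if p = p0 then {0::real} else UNIV)"
    by (rule emeasure_mono) (auto intro!: sets_PiM_I_finite assms)
  also have "\<dots> = (\<Prod>p\<in>B. emeasure lborel (if p = p0 then {0::real} else UNIV))"
    using assms by (subst emeasure_PiM) auto
  also have "\<dots> = 0"
    using assms \<open>p0 \<in> B\<close> by (intro prod_zero bexI[of _ p0]) auto
  finally show ?thesis using False by simp
qed

lemma distr_PiM_lborel_sum_squares:
  assumes "finite B" "B \<noteq> {}"
  shows "distr (PiM B (\<lambda>_. lborel)) lborel (\<lambda>z. \<Sum>p\<in>B. (z p)\<^sup>2) = density lborel (radial_density (card B))"
    (is "?L = ?R")
proof (rule measure_eqI_generator_eq[where E="range (atMost :: real \<Rightarrow> real set)" and \<Omega>=UNIV and A="\<lambda>i. {..real i}"])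
  have "sets (borel :: real measure) = sigma_sets UNIV (range atMost)"
    unfolding borel_eq_atMost by (rule sets_measure_of) auto
  then show "sets ?L = sigma_sets UNIV (range atMost)" and "sets ?R = sigma_sets UNIV (range atMost)"
    by simp_all
  fix A :: "real set" assume "A \<in> range atMost"
  then obtain b where "A = {..b}" by auto
  moreover have "card B > 0" using assms by (simp add: card_gt_0_iff)
  ultimately show "emeasure ?L A = emeasure ?R A"
    using emeasure_PiM_lborel_sum_squares_atMost[OF assms, of b]
          emeasure_density_radial_density_atMost[of "card B" b]
    by (simp add: emeasure_distr vimage_def Collect_conj_eq Int_commute)
next
  fix i :: nat
  show "emeasure ?L {..real i} \<noteq> \<infinity>"
    using emeasure_PiM_lborel_sum_squares_atMost[OF assms, of "real i"]
    by (simp add: emeasure_distr vimage_def Collect_conj_eq Int_commute)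
qed (auto simp: Int_stable_def real_arch_simple intro!: exI[of _ "min _ _"])

lemma PiM_lborel_density:
  fixes g :: "'i \<Rightarrow> real \<Rightarrow> ennreal"
  assumes I: "finite I"
    and g [measurable]: "\<And>i. g i \<in> borel_measurable borel"
    and sf: "\<And>i. sigma_finite_measure (density lborel (g i))"
  shows "PiM I (\<lambda>i. density lborel (g i)) = density (PiM I (\<lambda>_. lborel)) (\<lambda>r. \<Prod>i\<in>I. g i (r i))"
proof -
  interpret L: product_sigma_finite "\<lambda>_. lborel :: real measure" by standard
  interpret D: product_sigma_finite "\<lambda>i. density lborel (g i)"
    unfolding product_sigma_finite_def using sf by auto
  show ?thesis
  proof (rule D.PiM_eqI[symmetric, OF I])
    fix A assume "\<And>i. i \<in> I \<Longrightarrow> A i \<in> sets (density lborel (g i))"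
    then have A [measurable]: "\<And>i. i \<in> I \<Longrightarrow> A i \<in> sets borel" by simp
    have "emeasure (density (PiM I (\<lambda>_. lborel)) (\<lambda>r. \<Prod>i\<in>I. g i (r i))) (Pi\<^sub>E I A)
        = (\<integral>\<^sup>+r. (\<Prod>i\<in>I. g i (r i)) * indicator (Pi\<^sub>E I A) r \<partial>PiM I (\<lambda>_. lborel))"
      using I by (subst emeasure_density) (auto intro!: sets_PiM_I_finite)
    also have "\<dots> = (\<integral>\<^sup>+r. (\<Prod>i\<in>I. g i (r i) * indicator (A i) (r i)) \<partial>PiM I (\<lambda>_. lborel))"
      using I by (intro nn_integral_cong)
        (auto simp: space_PiM prod.distrib indicator_def PiE_def Pi_def)
    also have "\<dots> = (\<Prod>i\<in>I. \<integral>\<^sup>+t. g i t * indicator (A i) t \<partial>lborel)"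
      by (intro L.product_nn_integral_prod I) auto
    also have "\<dots> = (\<Prod>i\<in>I. emeasure (density lborel (g i)) (A i))"
      by (intro prod.cong refl) (simp add: emeasure_density)
    finally show "emeasure (density (PiM I (\<lambda>_. lborel)) (\<lambda>r. \<Prod>i\<in>I. g i (r i))) (Pi\<^sub>E I A) =
                  (\<Prod>i\<in>I. emeasure (density lborel (g i)) (A i))" .
  qed (simp cong: sets_PiM_cong)
qed

section \<open>Squared norms of the blocks\<close>

lemma measurable_sqnorm:
  assumes "\<And>j. j < n i \<Longrightarrow> (i, j) \<in> I"
  shows "(\<lambda>x. sqnorm n x i) \<in> borel_measurable (PiM I (\<lambda>_. lborel))"
  unfolding sqnorm_def using assms by measurable

lemma measurable_sqnorm_idx [measurable]:
  "i \<le> k \<Longrightarrow> (\<lambda>x. sqnorm n x i) \<in> borel_measurable (PiM (idx k n) (\<lambda>_. lborel))"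
  by (rule measurable_sqnorm) (auto simp: idx_def)

lemma measurable_sqnorm_block [measurable]:
  "(\<lambda>x. sqnorm n x i) \<in> borel_measurable (PiM ({i} \<times> {..<n i}) (\<lambda>_. lborel))"
  by (rule measurable_sqnorm) auto

lemma sqnorm_eq_sum_block: "sqnorm n z i = (\<Sum>p\<in>{i} \<times> {..<n i}. (z p)\<^sup>2)"
proof -
  have "{i} \<times> {..<n i} = Pair i ` {..<n i}" by auto
  then show ?thesis by (simp add: sqnorm_def sum.reindex inj_on_def)
qed

lemma sqnorm_nonneg: "0 \<le> sqnorm n x i"
  unfolding sqnorm_def by (auto intro!: sum_nonneg)

lemma idx_0: "idx 0 n = {0} \<times> {..<n 0}"
  by (auto simp: idx_def)

lemma idx_Suc: "idx (Suc k) n = idx k n \<union> {Suc k} \<times> {..<n (Suc k)}"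
  by (auto simp: idx_def le_Suc_eq)

lemma finite_idx [simp]: "finite (idx k n)"
proof -
  have "idx k n \<subseteq> {..k} \<times> {..<Max (n ` {..k}) + 1}"
    by (auto simp: idx_def less_Suc_eq_le intro!: le_trans[OF less_imp_le Max_ge])
  then show ?thesis by (rule finite_subset) auto
qed

lemma sqnorm_merge_idx:
  assumes "i \<le> Suc k"
  shows "sqnorm n (merge (idx k n) ({Suc k} \<times> {..<n (Suc k)}) (x, y)) i =
         (if i \<le> k then sqnorm n x i else sqnorm n y i)"
  using assms by (auto simp: sqnorm_def merge_def idx_def le_Suc_eq intro!: sum.cong)

lemma emeasure_PiM_idx_sqnorm:
  assumes "\<And>i. i \<le> k \<Longrightarrow> A i \<in> sets borel"
  shows "emeasure (PiM (idx k n) (\<lambda>_. lborel))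
           {x \<in> space (PiM (idx k n) (\<lambda>_. lborel)). \<forall>i\<le>k. sqnorm n x i \<in> A i} =
         (\<Prod>i\<le>k. emeasure (PiM ({i} \<times> {..<n i}) (\<lambda>_. lborel))
           {z \<in> space (PiM ({i} \<times> {..<n i}) (\<lambda>_. lborel)). sqnorm n z i \<in> A i})"
  using assms
proof (induction k)
  case 0
  then show ?case by (simp add: idx_0)
next
  case (Suc k)
  interpret product_sigma_finite "\<lambda>_. lborel :: real measure" by standard
  define I where "I = idx k n"
  define J where "J = {Suc k} \<times> {..<n (Suc k)}"
  interpret PJ: finite_product_sigma_finite "\<lambda>_. lborel :: real measure" J
    by standard (simp add: J_def)
  have IJ: "I \<inter> J = {}" "finite I" "finite J"
    by (auto simp: I_def J_def) (auto simp: idx_def)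
  define S where "S = {x \<in> space (PiM I (\<lambda>_. lborel)). \<forall>i\<le>k. sqnorm n x i \<in> A i}"
  define C where "C = {z \<in> space (PiM J (\<lambda>_. lborel)). sqnorm n z (Suc k) \<in> A (Suc k)}"
  have SC: "S \<in> sets (PiM I (\<lambda>_. lborel))" "C \<in> sets (PiM J (\<lambda>_. lborel))"
    using Suc.prems unfolding S_def C_def I_def J_def by measurable
  have "sqnorm n (merge I J (x, y)) i = (if i \<le> k then sqnorm n x i else sqnorm n y i)"
    if "i \<le> Suc k" for x y i
    using that unfolding I_def J_def by (rule sqnorm_merge_idx)
  then have preimage: "merge I J -` {x \<in> space (PiM (I \<union> J) (\<lambda>_. lborel)). \<forall>i\<le>Suc k. sqnorm n x i \<in> A i}
      \<inter> space (PiM I (\<lambda>_. lborel) \<Otimes>\<^sub>M PiM J (\<lambda>_. lborel)) = S \<times> C"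
    by (auto simp: S_def C_def space_pair_measure le_Suc_eq space_PiM)
  have U: "idx (Suc k) n = I \<union> J" by (simp add: idx_Suc I_def J_def)
  have meas: "{x \<in> space (PiM (I \<union> J) (\<lambda>_. lborel)). \<forall>i\<le>Suc k. sqnorm n x i \<in> A i}
      \<in> sets (PiM (I \<union> J) (\<lambda>_. lborel))"
    using Suc.prems unfolding U[symmetric] by measurable
  from U have "emeasure (PiM (idx (Suc k) n) (\<lambda>_. lborel))
      {x \<in> space (PiM (idx (Suc k) n) (\<lambda>_. lborel)). \<forall>i\<le>Suc k. sqnorm n x i \<in> A i}
      = emeasure (distr (PiM I (\<lambda>_. lborel) \<Otimes>\<^sub>M PiM J (\<lambda>_. lborel)) (PiM (I \<union> J) (\<lambda>_. lborel)) (merge I J))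
          {x \<in> space (PiM (I \<union> J) (\<lambda>_. lborel)). \<forall>i\<le>Suc k. sqnorm n x i \<in> A i}"
    by (simp only: distr_merge[OF IJ])
  also have "\<dots> = emeasure (PiM I (\<lambda>_. lborel) \<Otimes>\<^sub>M PiM J (\<lambda>_. lborel)) (S \<times> C)"
    by (rule emeasure_distr[OF measurable_merge meas, unfolded preimage])
  also have "\<dots> = emeasure (PiM I (\<lambda>_. lborel)) S * emeasure (PiM J (\<lambda>_. lborel)) C"
    using SC by (rule PJ.emeasure_pair_measure_Times)
  finally show ?case
    using Suc by (simp add: S_def C_def I_def J_def mult.commute)
qed

lemma emeasure_PiM_block_sqnorm:
  assumes "n i > 0" and "A \<in> sets borel"
  shows "emeasure (PiM ({i} \<times> {..<n i}) (\<lambda>_. lborel))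
           {z \<in> space (PiM ({i} \<times> {..<n i}) (\<lambda>_. lborel)). sqnorm n z i \<in> A} =
         emeasure (density lborel (radial_density (n i))) A"
proof -
  have "{..<n i} \<noteq> {}" using assms by auto
  then have "density lborel (radial_density (n i)) =
             distr (PiM ({i} \<times> {..<n i}) (\<lambda>_. lborel)) lborel (\<lambda>z. sqnorm n z i)"
    using distr_PiM_lborel_sum_squares[of "{i} \<times> {..<n i}"]
    by (simp add: sqnorm_eq_sum_block card_cartesian_product)
  then show ?thesis
    using assms by (simp add: emeasure_distr Collect_conj_eq Int_commute vimage_def)
qed

lemma distr_PiM_idx_sqnorm:
  assumes "\<forall>i\<le>k. n i > 0"
  shows "distr (PiM (idx k n) (\<lambda>_. lborel)) (PiM {..k} (\<lambda>_. lborel)) (\<lambda>x. \<lambda>i\<in>{..k}. sqnorm n x i) =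
         density (PiM {..k} (\<lambda>_. lborel)) (\<lambda>r. \<Prod>i\<le>k. radial_density (n i) (r i))"
proof -
  interpret D: product_sigma_finite "\<lambda>i. density lborel (radial_density (n i))"
    unfolding product_sigma_finite_def using sigma_finite_density_radial_density by auto
  have "distr (PiM (idx k n) (\<lambda>_. lborel)) (PiM {..k} (\<lambda>_. lborel)) (\<lambda>x. \<lambda>i\<in>{..k}. sqnorm n x i) =
        PiM {..k} (\<lambda>i. density lborel (radial_density (n i)))"
  proof (rule D.PiM_eqI)
    fix A assume "\<And>i. i \<in> {..k} \<Longrightarrow> A i \<in> sets (density lborel (radial_density (n i)))"
    then have A: "\<And>i. i \<le> k \<Longrightarrow> A i \<in> sets borel" by simp
    have "emeasure (distr (PiM (idx k n) (\<lambda>_. lborel)) (PiM {..k} (\<lambda>_. lborel))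
            (\<lambda>x. \<lambda>i\<in>{..k}. sqnorm n x i)) (Pi\<^sub>E {..k} A) =
          emeasure (PiM (idx k n) (\<lambda>_. lborel))
            {x \<in> space (PiM (idx k n) (\<lambda>_. lborel)). \<forall>i\<le>k. sqnorm n x i \<in> A i}"
      using A by (subst emeasure_distr)
        (auto intro!: sets_PiM_I_finite arg_cong2[where f=emeasure] measurable_restrict)
    also have "\<dots> = (\<Prod>i\<le>k. emeasure (density lborel (radial_density (n i))) (A i))"
      using A assms by (simp add: emeasure_PiM_idx_sqnorm emeasure_PiM_block_sqnorm)
    finally show "emeasure (distr (PiM (idx k n) (\<lambda>_. lborel)) (PiM {..k} (\<lambda>_. lborel))
                    (\<lambda>x. \<lambda>i\<in>{..k}. sqnorm n x i)) (Pi\<^sub>E {..k} A) =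
                  (\<Prod>i\<le>k. emeasure (density lborel (radial_density (n i))) (A i))" .
  qed (simp_all cong: sets_PiM_cong)
  also have "\<dots> = density (PiM {..k} (\<lambda>_. lborel)) (\<lambda>r. \<Prod>i\<le>k. radial_density (n i) (r i))"
    by (rule PiM_lborel_density) (auto simp: sigma_finite_density_radial_density)
  finally show ?thesis .
qed

lemma distr_density_sqnorm:
  assumes n: "\<forall>i\<le>k. n i > 0" and Q [measurable]: "Q \<in> borel_measurable (PiM {..k} (\<lambda>_. lborel))"
  shows "distr (density (PiM (idx k n) (\<lambda>_. lborel)) (\<lambda>x. Q (\<lambda>i\<in>{..k}. sqnorm n x i)))
           (PiM {..k} (\<lambda>_. lborel)) (\<lambda>x. \<lambda>i\<in>{..k}. sqnorm n x i) =
         density (PiM {..k} (\<lambda>_. lborel)) (\<lambda>r. (\<Prod>i\<le>k. radial_density (n i) (r i)) * Q r)"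
proof -
  have [measurable]: "(\<lambda>x. \<lambda>i\<in>{..k}. sqnorm n x i) \<in>
                      measurable (PiM (idx k n) (\<lambda>_. lborel)) (PiM {..k} (\<lambda>_. lborel))"
    by (intro measurable_restrict) auto
  have "distr (density (PiM (idx k n) (\<lambda>_. lborel)) (\<lambda>x. Q (\<lambda>i\<in>{..k}. sqnorm n x i)))
          (PiM {..k} (\<lambda>_. lborel)) (\<lambda>x. \<lambda>i\<in>{..k}. sqnorm n x i) =
        density (density (PiM {..k} (\<lambda>_. lborel)) (\<lambda>r. \<Prod>i\<le>k. radial_density (n i) (r i))) Q"
    by (simp add: density_distr distr_PiM_idx_sqnorm[OF n, symmetric])
  also have "\<dots> = density (PiM {..k} (\<lambda>_. lborel)) (\<lambda>r. (\<Prod>i\<le>k. radial_density (n i) (r i)) * Q r)"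
    by (rule density_density_eq) simp_all
  finally show ?thesis .
qed

section \<open>The ratio substitution\<close>

lemma distr_PiM_lborel_scale:
  assumes J: "finite J" and c: "c > (0::real)"
  shows "distr (PiM J (\<lambda>_. lborel)) (PiM J (\<lambda>_. lborel)) (\<lambda>y. \<lambda>i\<in>J. c * y i) =
         density (PiM J (\<lambda>_. lborel)) (\<lambda>_. ennreal (inverse c ^ card J))"
proof -
  interpret L: product_sigma_finite "\<lambda>_. lborel :: real measure" by standard
  have sf: "sigma_finite_measure (density lborel (\<lambda>_::real. ennreal (inverse c)))"
    by (subst sigma_finite_measure.sigma_finite_iff_density_finite[OF sigma_finite_lborel]) auto
  interpret D: product_sigma_finite "\<lambda>i. density lborel (\<lambda>_::real. ennreal (inverse c))"
    unfolding product_sigma_finite_def using sf by auto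
  have scale: "distr lborel borel ((*) c) = density lborel (\<lambda>_. ennreal (inverse c))"
    using lborel_distr_mult[of c] c by simp
  have "distr (PiM J (\<lambda>_. lborel)) (PiM J (\<lambda>_. lborel)) (\<lambda>y. \<lambda>i\<in>J. c * y i) =
        PiM J (\<lambda>i. density lborel (\<lambda>_::real. ennreal (inverse c)))"
  proof (rule D.PiM_eqI[OF J])
    fix A assume "\<And>i. i \<in> J \<Longrightarrow> A i \<in> sets (density lborel (\<lambda>_::real. ennreal (inverse c)))"
    then have A: "\<And>i. i \<in> J \<Longrightarrow> A i \<in> sets borel" by simp
    then have A': "\<And>i. i \<in> J \<Longrightarrow> (*) c -` A i \<in> sets borel"
      by (intro measurable_sets_borel[OF _ A]) auto
    have "(\<lambda>y. \<lambda>i\<in>J. c * y i) -` Pi\<^sub>E J A \<inter> space (PiM J (\<lambda>_. lborel)) = Pi\<^sub>E J (\<lambda>i. (*) c -` A i)"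
      by (auto simp: space_PiM PiE_def Pi_def extensional_def)
    then have "emeasure (distr (PiM J (\<lambda>_. lborel)) (PiM J (\<lambda>_. lborel)) (\<lambda>y. \<lambda>i\<in>J. c * y i)) (Pi\<^sub>E J A) =
               emeasure (PiM J (\<lambda>_. lborel)) (Pi\<^sub>E J (\<lambda>i. (*) c -` A i))"
      using A J by (subst emeasure_distr) (auto intro!: sets_PiM_I_finite measurable_restrict)
    also have "\<dots> = (\<Prod>i\<in>J. emeasure lborel ((*) c -` A i))"
      using A' J by (subst L.emeasure_PiM) auto
    also have "\<dots> = (\<Prod>i\<in>J. emeasure (density lborel (\<lambda>_::real. ennreal (inverse c))) (A i))"
      using A by (intro prod.cong refl) (simp add: scale[symmetric] emeasure_distr)
    finally show "emeasure (distr (PiM J (\<lambda>_. lborel)) (PiM J (\<lambda>_. lborel)) (\<lambda>y. \<lambda>i\<in>J. c * y i)) (Pi\<^sub>E J A) =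
                  (\<Prod>i\<in>J. emeasure (density lborel (\<lambda>_::real. ennreal (inverse c))) (A i))" .
  qed (simp cong: sets_PiM_cong)
  also have "\<dots> = density (PiM J (\<lambda>_. lborel)) (\<lambda>r. \<Prod>i\<in>J. ennreal (inverse c))"
    by (rule PiM_lborel_density[OF J]) (auto simp: sf)
  finally show ?thesis
    using c by (simp add: ennreal_power)
qed

lemma nn_integral_PiM_lborel_scale:
  assumes J: "finite J" and c: "c > (0::real)"
    and f [measurable]: "f \<in> borel_measurable (PiM J (\<lambda>_. lborel))"
  shows "(\<integral>\<^sup>+r. f r \<partial>PiM J (\<lambda>_. lborel)) =
         ennreal (c ^ card J) * (\<integral>\<^sup>+y. f (\<lambda>i\<in>J. c * y i) \<partial>PiM J (\<lambda>_. lborel))"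
proof -
  have "(\<integral>\<^sup>+y. f (\<lambda>i\<in>J. c * y i) \<partial>PiM J (\<lambda>_. lborel)) =
        (\<integral>\<^sup>+r. f r \<partial>distr (PiM J (\<lambda>_. lborel)) (PiM J (\<lambda>_. lborel)) (\<lambda>y. \<lambda>i\<in>J. c * y i))"
    by (subst nn_integral_distr) (auto intro!: measurable_restrict)
  also have "\<dots> = ennreal (inverse c ^ card J) * (\<integral>\<^sup>+r. f r \<partial>PiM J (\<lambda>_. lborel))"
    by (simp add: distr_PiM_lborel_scale[OF J c] nn_integral_density nn_integral_cmult)
  finally have "ennreal (c ^ card J) * (\<integral>\<^sup>+y. f (\<lambda>i\<in>J. c * y i) \<partial>PiM J (\<lambda>_. lborel)) =
                ennreal (c ^ card J) * ennreal (inverse c ^ card J) * (\<integral>\<^sup>+r. f r \<partial>PiM J (\<lambda>_. lborel))"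
    by (simp add: mult.assoc)
  also have "ennreal (c ^ card J) * ennreal (inverse c ^ card J) = 1"
    using c by (simp add: ennreal_mult'[symmetric] power_mult_distrib[symmetric])
  finally show ?thesis by (simp add: restrict_def)
qed

definition ratio_coords :: "nat \<Rightarrow> (nat \<Rightarrow> real) \<Rightarrow> nat \<Rightarrow> real" where
  "ratio_coords k r = (\<lambda>i\<in>{..k}. if i = 0 then r 0 else r i / r 0)"

definition ratio_coords_inv :: "nat \<Rightarrow> (nat \<Rightarrow> real) \<Rightarrow> nat \<Rightarrow> real" where
  "ratio_coords_inv k y = (\<lambda>i\<in>{..k}. if i = 0 then y 0 else y 0 * y i)"

lemma measurable_ratio_coords [measurable]:
  "ratio_coords k \<in> measurable (PiM {..k} (\<lambda>_. lborel)) (PiM {..k} (\<lambda>_. lborel))"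
  unfolding ratio_coords_def by (intro measurable_restrict) auto

lemma measurable_ratio_coords_inv [measurable]:
  "ratio_coords_inv k \<in> measurable (PiM {..k} (\<lambda>_. lborel)) (PiM {..k} (\<lambda>_. lborel))"
  unfolding ratio_coords_inv_def by (intro measurable_restrict) auto

lemma measurable_ratio_coords_sqnorm [measurable]:
  "(\<lambda>x. ratio_coords k (sqnorm n x)) \<in> measurable (PiM (idx k n) (\<lambda>_. lborel)) (PiM {..k} (\<lambda>_. lborel))"
  unfolding ratio_coords_def by (intro measurable_restrict) auto

lemma ratio_coords_restrict: "ratio_coords k (\<lambda>i\<in>{..k}. r i) = ratio_coords k r"
  by (auto simp: ratio_coords_def)

lemma ratio_coords_ratio_coords_inv:
  "y \<in> extensional {..k} \<Longrightarrow> y 0 \<noteq> 0 \<Longrightarrow> ratio_coords k (ratio_coords_inv k y) = y"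
  by (auto simp: ratio_coords_def ratio_coords_inv_def fun_eq_iff extensional_def)

lemma ratio_coords_inv_pos_iff:
  "0 < y 0 \<Longrightarrow> (\<forall>i\<le>k. 0 < ratio_coords_inv k y i) \<longleftrightarrow> (\<forall>i\<le>k. 0 < y i)"
  by (auto simp: ratio_coords_inv_def zero_less_mult_iff) (metis neq0_conv)

lemma nn_integral_ratio_coords_inv_slice:
  fixes F :: "(nat \<Rightarrow> real) \<Rightarrow> ennreal"
  assumes F [measurable]: "F \<in> borel_measurable (PiM {..k} (\<lambda>_. lborel))" and t: "t > 0"
  shows "(\<integral>\<^sup>+x. F (x(0 := t)) \<partial>PiM {1..k} (\<lambda>_. lborel)) =
         (\<integral>\<^sup>+x. F (ratio_coords_inv k (x(0 := t))) * ennreal (t ^ k) \<partial>PiM {1..k} (\<lambda>_. lborel))"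
proof -
  have K: "{..k} = insert 0 {1..k}" by auto
  have [measurable]: "(\<lambda>x. x(0 := t)) \<in> measurable (PiM {1..k} (\<lambda>_. lborel)) (PiM {..k} (\<lambda>_. lborel))"
    unfolding K by (rule measurable_fun_upd[where J="{1..k}"]) auto
  have [measurable]: "(\<lambda>y. \<lambda>i\<in>{1..k}. t * y i) \<in>
                      measurable (PiM {1..k} (\<lambda>_. lborel)) (PiM {1..k} (\<lambda>_. lborel))"
    by (intro measurable_restrict) auto
  have "(\<lambda>x. F (x(0 := t))) \<in> borel_measurable (PiM {1..k} (\<lambda>_. lborel))"
    by measurable
  then have "(\<integral>\<^sup>+x. F (x(0 := t)) \<partial>PiM {1..k} (\<lambda>_. lborel)) =
        ennreal (t ^ k) * (\<integral>\<^sup>+y. F ((\<lambda>i\<in>{1..k}. t * y i)(0 := t)) \<partial>PiM {1..k} (\<lambda>_. lborel))"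
    using nn_integral_PiM_lborel_scale[OF finite_atLeastAtMost t, of "\<lambda>x. F (x(0 := t))"] by simp
  also have "\<dots> = (\<integral>\<^sup>+y. F ((\<lambda>i\<in>{1..k}. t * y i)(0 := t)) * ennreal (t ^ k) \<partial>PiM {1..k} (\<lambda>_. lborel))"
    by (subst nn_integral_multc) (measurable, rule mult.commute)
  also have "\<dots> = (\<integral>\<^sup>+x. F (ratio_coords_inv k (x(0 := t))) * ennreal (t ^ k) \<partial>PiM {1..k} (\<lambda>_. lborel))"
  proof (intro nn_integral_cong)
    fix x assume "x \<in> space (PiM {1..k} (\<lambda>_. lborel :: real measure))"
    then have "ratio_coords_inv k (x(0 := t)) = (\<lambda>i\<in>{1..k}. t * x i)(0 := t)"
      by (auto simp: ratio_coords_inv_def K space_PiM PiE_def extensional_def fun_eq_iff)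
    then show "F ((\<lambda>i\<in>{1..k}. t * x i)(0 := t)) * ennreal (t ^ k) =
               F (ratio_coords_inv k (x(0 := t))) * ennreal (t ^ k)"
      by simp
  qed
  finally show ?thesis .
qed

lemma nn_integral_ratio_coords_inv:
  fixes F :: "(nat \<Rightarrow> real) \<Rightarrow> ennreal"
  assumes F [measurable]: "F \<in> borel_measurable (PiM {..k} (\<lambda>_. lborel))"
    and F_orthant: "\<And>r. \<not> (\<forall>i\<le>k. 0 < r i) \<Longrightarrow> F r = 0"
  shows "(\<integral>\<^sup>+r. F r \<partial>PiM {..k} (\<lambda>_. lborel)) =
         (\<integral>\<^sup>+y. (if \<forall>i\<le>k. 0 < y i then F (ratio_coords_inv k y) * ennreal (y 0 ^ k) else 0)
            \<partial>PiM {..k} (\<lambda>_. lborel))"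
    (is "_ = (\<integral>\<^sup>+y. ?G y \<partial>_)")
proof -
  interpret L: product_sigma_finite "\<lambda>_. lborel :: real measure" by standard
  have K: "{..k} = insert 0 {1..k}" by auto
  have "?G \<in> borel_measurable (PiM {..k} (\<lambda>_. lborel))"
    by measurable
  with F have F': "F \<in> borel_measurable (PiM (insert 0 {1..k}) (\<lambda>_. lborel))"
    and G': "?G \<in> borel_measurable (PiM (insert 0 {1..k}) (\<lambda>_. lborel))"
    by (simp_all only: K)
  have slice: "(\<integral>\<^sup>+x. F (x(0 := t)) \<partial>PiM {1..k} (\<lambda>_. lborel)) =
               (\<integral>\<^sup>+x. ?G (x(0 := t)) \<partial>PiM {1..k} (\<lambda>_. lborel))" for t
  proof (cases "t > 0")
    case True
    have "?G (x(0 := t)) = F (ratio_coords_inv k (x(0 := t))) * ennreal (t ^ k)" for x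
      using True F_orthant ratio_coords_inv_pos_iff[of "x(0 := t)" k] by auto
    then show ?thesis
      using nn_integral_ratio_coords_inv_slice[OF F True] by simp
  next
    case False
    then have "F (x(0 := t)) = 0" "?G (x(0 := t)) = 0" for x
      by (auto intro!: F_orthant)
    then show ?thesis by simp
  qed
  have "(\<integral>\<^sup>+r. F r \<partial>PiM {..k} (\<lambda>_. lborel)) =
        (\<integral>\<^sup>+t. \<integral>\<^sup>+x. F (x(0 := t)) \<partial>PiM {1..k} (\<lambda>_. lborel) \<partial>lborel)"
    unfolding K by (rule L.product_nn_integral_insert_rev[OF _ _ F']) simp_all
  also have "\<dots> = (\<integral>\<^sup>+t. \<integral>\<^sup>+x. ?G (x(0 := t)) \<partial>PiM {1..k} (\<lambda>_. lborel) \<partial>lborel)"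
    by (simp only: slice)
  also have "\<dots> = (\<integral>\<^sup>+y. ?G y \<partial>PiM {..k} (\<lambda>_. lborel))"
    unfolding K by (rule L.product_nn_integral_insert_rev[OF _ _ G', symmetric]) simp_all
  finally show ?thesis .
qed

lemma distr_density_ratio_coords:
  fixes g :: "(nat \<Rightarrow> real) \<Rightarrow> ennreal"
  assumes g [measurable]: "g \<in> borel_measurable (PiM {..k} (\<lambda>_. lborel))"
    and g_orthant: "\<And>r. \<not> (\<forall>i\<le>k. 0 < r i) \<Longrightarrow> g r = 0"
  shows "distr (density (PiM {..k} (\<lambda>_. lborel)) g) (PiM {..k} (\<lambda>_. lborel)) (ratio_coords k) =
         density (PiM {..k} (\<lambda>_. lborel))
           (\<lambda>y. if \<forall>i\<le>k. 0 < y i then g (ratio_coords_inv k y) * ennreal (y 0 ^ k) else 0)"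
    (is "?L = density ?K ?g'")
proof (rule measure_eqI)
  fix A assume "A \<in> sets ?L"
  then have [measurable]: "A \<in> sets ?K" by simp
  have "emeasure ?L A = (\<integral>\<^sup>+r. g r * indicator A (ratio_coords k r) \<partial>?K)"
    by (simp add: nn_integral_distr nn_integral_density flip: nn_integral_indicator)
  also have "\<dots> = (\<integral>\<^sup>+y. (if \<forall>i\<le>k. 0 < y i
                           then g (ratio_coords_inv k y) * indicator A (ratio_coords k (ratio_coords_inv k y))
                                * ennreal (y 0 ^ k)
                           else 0) \<partial>?K)"
    using g_orthant by (intro nn_integral_ratio_coords_inv) auto
  also have "\<dots> = (\<integral>\<^sup>+y. ?g' y * indicator A y \<partial>?K)"
    by (intro nn_integral_cong)
       (auto simp: ratio_coords_ratio_coords_inv space_PiM PiE_def mult_ac)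
  also have "\<dots> = emeasure (density ?K ?g') A"
    by (simp add: emeasure_density)
  finally show "emeasure ?L A = emeasure (density ?K ?g') A" .
qed simp

section \<open>The generalised gamma-beta type II density\<close>

lemma quadratic_form_ratio_coords_inv:
  assumes "\<sigma> 0 \<noteq> 0"
  shows "(\<Sum>i\<le>k. inverse ((\<sigma> i)\<^sup>2) * ratio_coords_inv k y i) =
         y 0 * inverse ((\<sigma> 0)\<^sup>2) * (1 + (\<sigma> 0)\<^sup>2 * (\<Sum>i\<in>{1..k}. inverse ((\<sigma> i)\<^sup>2) * y i))"
proof -
  have "{..k} = insert 0 {1..k}" by auto
  then have "(\<Sum>i\<le>k. inverse ((\<sigma> i)\<^sup>2) * ratio_coords_inv k y i) =
             inverse ((\<sigma> 0)\<^sup>2) * y 0 + y 0 * (\<Sum>i\<in>{1..k}. inverse ((\<sigma> i)\<^sup>2) * y i)"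
    by (simp add: ratio_coords_inv_def sum_distrib_left mult_ac)
  with assms show ?thesis by (simp add: distrib_left mult_ac)
qed

lemma ggb_transformed_density_ratio_coords_inv:
  assumes y: "\<forall>i\<le>k. 0 < y i" and \<sigma>: "\<forall>i\<le>k. \<sigma> i > 0" and n: "\<forall>i\<le>k. n i > 0"
  defines "u \<equiv> ratio_coords_inv k y"
  shows "ggb_transformed_density k n \<sigma> h y =
         (\<Prod>i\<le>k. pi powr (real (n i) / 2) / Gamma (real (n i) / 2) * u i powr (real (n i) / 2 - 1))
         * ((\<Prod>i\<le>k. inverse (\<sigma> i ^ n i)) * h (\<Sum>i\<le>k. inverse ((\<sigma> i)\<^sup>2) * u i)) * y 0 ^ k"
proof -
  define w where "w i = (if i = 0 then 1 else y i)" for i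
  define N where "N = real (nstar k n)"
  have K: "{..k} = insert 0 {1..k}" by auto
  have "y 0 > 0" using y by auto
  have u: "u i = y 0 * w i" if "i \<le> k" for i
    using that by (simp add: u_def ratio_coords_inv_def w_def)
  have radial: "(\<Prod>i\<le>k. pi powr (real (n i) / 2) / Gamma (real (n i) / 2) * u i powr (real (n i) / 2 - 1))
      = (\<Prod>i\<le>k. pi powr (real (n i) / 2)) / (\<Prod>i\<le>k. Gamma (real (n i) / 2))
        * (\<Prod>i\<le>k. y 0 powr (real (n i) / 2 - 1)) * (\<Prod>i\<le>k. w i powr (real (n i) / 2 - 1))"
    by (simp add: u prod.distrib powr_mult prod_dividef)
  have pi_powr: "(\<Prod>i\<le>k. pi powr (real (n i) / 2)) = pi powr (N / 2)"
    by (simp add: powr_sum[symmetric] N_def nstar_def sum_divide_distrib)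
  have "(\<Sum>i\<le>k. real (n i) / 2 - 1) = N / 2 - 1 - real k"
    by (simp add: sum_subtractf N_def nstar_def sum_divide_distrib)
  then have "(\<Prod>i\<le>k. y 0 powr (real (n i) / 2 - 1)) = y 0 powr (N / 2 - 1 - real k)"
    using \<open>y 0 > 0\<close> by (simp add: powr_sum[symmetric])
  then have s0_powr: "(\<Prod>i\<le>k. y 0 powr (real (n i) / 2 - 1)) * y 0 ^ k = y 0 powr (N / 2 - 1)"
    using \<open>y 0 > 0\<close> by (simp add: powr_realpow[symmetric] powr_add[symmetric])
  have ratio_powr: "(\<Prod>i\<le>k. w i powr (real (n i) / 2 - 1)) = (\<Prod>i\<in>{1..k}. y i powr (real (n i) / 2 - 1))"
    unfolding K by (subst prod.insert) (auto simp: w_def intro!: prod.cong)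
  have \<sigma>_prod: "(\<Prod>i\<le>k. inverse (\<sigma> i ^ n i)) = inverse (\<Prod>i\<le>k. \<sigma> i ^ n i)"
    using prod_inversef[of "\<lambda>i. \<sigma> i ^ n i" "{..k}"] by (simp add: o_def)
  have quad_form: "(\<Sum>i\<le>k. inverse ((\<sigma> i)\<^sup>2) * u i) =
      y 0 * inverse ((\<sigma> 0)\<^sup>2) * (1 + (\<sigma> 0)\<^sup>2 * (\<Sum>i\<in>{1..k}. inverse ((\<sigma> i)\<^sup>2) * y i))"
    unfolding u_def using \<sigma> by (intro quadratic_form_ratio_coords_inv) auto
  have "(\<Prod>i\<le>k. \<sigma> i ^ n i) \<noteq> 0" using \<sigma> by auto
  moreover have "\<forall>i\<le>k. Gamma (real (n i) / 2) > 0"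
    using n by auto
  then have "(\<Prod>i\<le>k. Gamma (real (n i) / 2)) \<noteq> 0"
    by auto
  ultimately show ?thesis
    unfolding ggb_transformed_density_def if_P[OF y] N_def[symmetric] s0_powr[symmetric]
      radial pi_powr ratio_powr \<sigma>_prod quad_form prod.distrib[of "\<lambda>i. \<sigma> i ^ n i"]
    by (simp add: field_simps)
qed

lemma radial_density_ratio_coords_inv:
  assumes y: "\<forall>i\<le>k. 0 < y i" and \<sigma>: "\<forall>i\<le>k. \<sigma> i > 0" and n: "\<forall>i\<le>k. n i > 0"
    and h_nonneg: "\<forall>t\<ge>0. h t \<ge> 0"
  defines "u \<equiv> ratio_coords_inv k y"
  shows "(\<Prod>i\<le>k. radial_density (n i) (u i))
           * ennreal ((\<Prod>i\<le>k. inverse (\<sigma> i ^ n i)) * h (\<Sum>i\<le>k. inverse ((\<sigma> i)\<^sup>2) * u i))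
           * ennreal (y 0 ^ k) =
         ennreal (ggb_transformed_density k n \<sigma> h y)"
proof -
  have u: "0 < u i" if "i \<le> k" for i
    using y ratio_coords_inv_pos_iff[of y k] that by (auto simp: u_def)
  have "0 \<le> (\<Sum>i\<le>k. inverse ((\<sigma> i)\<^sup>2) * u i)"
    using u by (intro sum_nonneg mult_nonneg_nonneg) (simp_all add: less_imp_le)
  then have "0 \<le> (\<Prod>i\<le>k. inverse (\<sigma> i ^ n i)) * h (\<Sum>i\<le>k. inverse ((\<sigma> i)\<^sup>2) * u i)"
    using \<sigma> h_nonneg by (intro mult_nonneg_nonneg prod_nonneg) auto
  moreover have "(\<Prod>i\<le>k. radial_density (n i) (u i)) =
      ennreal (\<Prod>i\<le>k. pi powr (real (n i) / 2) / Gamma (real (n i) / 2) * u i powr (real (n i) / 2 - 1))"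
    using u n unfolding radial_density_def
    by (subst prod_ennreal[symmetric]) (auto intro!: prod.cong divide_nonneg_pos)
  moreover have "0 \<le> (\<Prod>i\<le>k. pi powr (real (n i) / 2) / Gamma (real (n i) / 2) *
                                u i powr (real (n i) / 2 - 1))"
    using n by (auto intro!: prod_nonneg divide_nonneg_pos)
  moreover have "0 \<le> y 0 ^ k" using y[rule_format, of 0] by simp
  ultimately show ?thesis
    by (simp add: u_def ggb_transformed_density_ratio_coords_inv[OF y \<sigma> n] ennreal_mult'')
qed

lemma distr_ggb_density_ratio_coords:
  assumes h [measurable]: "h \<in> borel_measurable borel" and h_nonneg: "\<forall>t\<ge>0. h t \<ge> 0"
    and n: "\<forall>i\<le>k. n i > 0" and \<sigma>: "\<forall>i\<le>k. \<sigma> i > 0"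
  shows "distr (density (PiM (idx k n) (\<lambda>_. lborel)) (\<lambda>x. ennreal (ggb_density k n \<sigma> h x)))
           (PiM {..k} (\<lambda>_. lborel)) (\<lambda>x. ratio_coords k (sqnorm n x)) =
         density (PiM {..k} (\<lambda>_. lborel)) (\<lambda>y. ennreal (ggb_transformed_density k n \<sigma> h y))"
proof -
  let ?I = "PiM (idx k n) (\<lambda>_. lborel :: real measure)"
  let ?K = "PiM {..k} (\<lambda>_. lborel :: real measure)"
  define R where "R x = (\<lambda>i\<in>{..k}. sqnorm n x i)" for x
  define G where "G r = (\<Prod>i\<le>k. radial_density (n i) (r i))" for r
  define Q where "Q r = ennreal ((\<Prod>i\<le>k. inverse (\<sigma> i ^ n i)) * h (\<Sum>i\<le>k. inverse ((\<sigma> i)\<^sup>2) * r i))"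
    for r
  have [measurable]: "R \<in> measurable ?I ?K"
    unfolding R_def by (intro measurable_restrict) auto
  have [measurable]: "G \<in> borel_measurable ?K" "Q \<in> borel_measurable ?K"
    unfolding G_def Q_def by measurable
  have G_orthant: "G r = 0" if "\<not> (\<forall>i\<le>k. 0 < r i)" for r
  proof -
    from that obtain i where "i \<le> k" "\<not> 0 < r i" by auto
    then show ?thesis
      unfolding G_def by (intro prod_zero bexI[of _ i]) (auto simp: radial_density_def)
  qed
  have "density ?I (\<lambda>x. ennreal (ggb_density k n \<sigma> h x)) = density ?I (\<lambda>x. Q (R x))"
    by (simp add: ggb_density_def Q_def R_def)
  then have "distr (density ?I (\<lambda>x. ennreal (ggb_density k n \<sigma> h x))) ?K (\<lambda>x. ratio_coords k (sqnorm n x)) =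
             distr (distr (density ?I (\<lambda>x. Q (R x))) ?K R) ?K (ratio_coords k)"
    by (simp add: distr_distr comp_def R_def ratio_coords_restrict)
  also have "\<dots> = distr (density ?K (\<lambda>r. G r * Q r)) ?K (ratio_coords k)"
    unfolding R_def G_def by (simp add: distr_density_sqnorm[OF n])
  also have "\<dots> = density ?K (\<lambda>y. if \<forall>i\<le>k. 0 < y i
                               then G (ratio_coords_inv k y) * Q (ratio_coords_inv k y) * ennreal (y 0 ^ k)
                               else 0)"
    by (rule distr_density_ratio_coords) (simp_all add: G_orthant)
  also have "\<dots> = density ?K (\<lambda>y. ennreal (ggb_transformed_density k n \<sigma> h y))"
    using radial_density_ratio_coords_inv[OF _ \<sigma> n h_nonneg]
    by (intro density_cong) (auto simp: G_def Q_def ggb_transformed_density_def)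
  finally show ?thesis .
qed

lemma ggb_density_cong:
  assumes "\<forall>t\<ge>0. h' t = h t"
  shows "ggb_density k n \<sigma> h' = ggb_density k n \<sigma> h"
proof -
  have "0 \<le> (\<Sum>i\<le>k. inverse ((\<sigma> i)\<^sup>2) * sqnorm n x i)" for x
    by (intro sum_nonneg mult_nonneg_nonneg) (simp_all add: sqnorm_nonneg)
  then show ?thesis
    using assms by (simp add: fun_eq_iff ggb_density_def)
qed

lemma ggb_transformed_density_cong:
  assumes "\<forall>t\<ge>0. h' t = h t"
  shows "ggb_transformed_density k n \<sigma> h' = ggb_transformed_density k n \<sigma> h"
proof
  fix y :: "nat \<Rightarrow> real"
  show "ggb_transformed_density k n \<sigma> h' y = ggb_transformed_density k n \<sigma> h y"
  proof (cases "\<forall>i\<le>k. 0 < y i")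
    case True
    let ?t = "y 0 * inverse ((\<sigma> 0)\<^sup>2) * (1 + (\<sigma> 0)\<^sup>2 * (\<Sum>i\<in>{1..k}. inverse ((\<sigma> i)\<^sup>2) * y i))"
    have "0 \<le> ?t"
      using True by (intro mult_nonneg_nonneg add_nonneg_nonneg sum_nonneg) (auto intro: less_imp_le)
    then have "h' ?t = h ?t" using assms by simp
    then show ?thesis by (simp only: ggb_transformed_density_def)
  next
    case False
    then show ?thesis by (simp only: ggb_transformed_density_def if_False)
  qed
qed

lemma measurable_ggb_transformed_density [measurable]:
  assumes [measurable]: "h \<in> borel_measurable borel"
  shows "ggb_transformed_density k n \<sigma> h \<in> borel_measurable (PiM {..k} (\<lambda>_. lborel))"
  unfolding ggb_transformed_density_def by measurable

text \<open>The profile h is not assumed measurable. A Borel version of it on [0, \<infinity>) is read off the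
  density, which is measurable, along the ray x = (\<sigma>_0 sqrt t, 0, ..., 0).\<close>

lemma ggb_density_measurable_profile:
  assumes meas: "(\<lambda>x. ennreal (ggb_density k n \<sigma> h x)) \<in> borel_measurable (PiM (idx k n) (\<lambda>_. lborel))"
    and n: "n 0 > 0" and \<sigma>: "\<forall>i\<le>k. \<sigma> i > 0" and h: "\<forall>t\<ge>0. h t \<ge> 0"
  obtains h' where "h' \<in> borel_measurable borel" and "\<forall>t\<ge>0. h' t = h t"
proof
  define P where "P = (\<Prod>i\<le>k. inverse (\<sigma> i ^ n i))"
  have "P > 0" unfolding P_def using \<sigma> by (auto intro!: prod_pos)
  define ray where "ray t = (\<lambda>p\<in>idx k n. if p = (0, 0) then \<sigma> 0 * sqrt t else 0)" for t
  have [measurable]: "ray \<in> measurable lborel (PiM (idx k n) (\<lambda>_. lborel))"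
    unfolding ray_def by (intro measurable_restrict) auto
  have ray_quad_form: "(\<Sum>i\<le>k. inverse ((\<sigma> i)\<^sup>2) * sqnorm n (ray t) i) = t" if "t \<ge> 0" for t
  proof -
    have "sqnorm n (ray t) i = (if i = 0 then (\<sigma> 0)\<^sup>2 * t else 0)" if "i \<le> k" for i
    proof -
      have "sqnorm n (ray t) i = (\<Sum>j<n i. if i = 0 \<and> j = 0 then (\<sigma> 0)\<^sup>2 * t else 0)"
        unfolding sqnorm_def using \<open>i \<le> k\<close> \<open>t \<ge> 0\<close>
        by (intro sum.cong) (auto simp: ray_def idx_def power_mult_distrib)
      then show ?thesis using n by simp
    qed
    then have "(\<Sum>i\<le>k. inverse ((\<sigma> i)\<^sup>2) * sqnorm n (ray t) i) =
               (\<Sum>i\<le>k. if i = 0 then inverse ((\<sigma> 0)\<^sup>2) * ((\<sigma> 0)\<^sup>2 * t) else 0)"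
      by (intro sum.cong) auto
    then show ?thesis
      using \<sigma>[rule_format, of 0] by simp
  qed
  show "(\<lambda>t. enn2real (ennreal (ggb_density k n \<sigma> h (ray t))) / P) \<in> borel_measurable borel"
    using meas by measurable
  show "\<forall>t\<ge>0. enn2real (ennreal (ggb_density k n \<sigma> h (ray t))) / P = h t"
    using h \<open>P > 0\<close> by (simp add: ggb_density_def P_def[symmetric] ray_quad_form)
qed

theorem mainTheorem6:
  fixes M :: "'a measure" and X :: "'a \<Rightarrow> (nat \<times> nat \<Rightarrow> real)"
    and k :: nat and n :: "nat \<Rightarrow> nat" and \<sigma> :: "nat \<Rightarrow> real" and h :: "real \<Rightarrow> real"
  assumes "prob_space M"
    and "k \<ge> 1"
    and "\<forall>i\<le>k. n i > 0"
    and "\<forall>i\<le>k. \<sigma> i > 0"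
    and "\<forall>t\<ge>0. h t \<ge> 0"
    and "distributed M (PiM (idx k n) (\<lambda>_. lborel)) X (\<lambda>x. ennreal (ggb_density k n \<sigma> h x))"
  shows "distributed M (PiM {..k} (\<lambda>_. lborel))
           (\<lambda>\<omega>. restrict (\<lambda>i. if i = 0 then sqnorm n (X \<omega>) 0
                              else sqnorm n (X \<omega>) i / sqnorm n (X \<omega>) 0) {..k})
           (\<lambda>y. ennreal (ggb_transformed_density k n \<sigma> h y))"
proof -
  let ?I = "PiM (idx k n) (\<lambda>_. lborel :: real measure)"
  let ?K = "PiM {..k} (\<lambda>_. lborel :: real measure)"
  have X [measurable]: "X \<in> measurable M ?I"
    and density_meas: "(\<lambda>x. ennreal (ggb_density k n \<sigma> h x)) \<in> borel_measurable ?I"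
    and law_X: "distr M ?I X = density ?I (\<lambda>x. ennreal (ggb_density k n \<sigma> h x))"
    using assms(6) by (auto simp: distributed_def)
  obtain h' where [measurable]: "h' \<in> borel_measurable borel" and h': "\<forall>t\<ge>0. h' t = h t"
    using ggb_density_measurable_profile[OF density_meas] assms(3-5) by blast
  have "distr M ?K (\<lambda>\<omega>. ratio_coords k (sqnorm n (X \<omega>))) =
        distr (distr M ?I X) ?K (\<lambda>x. ratio_coords k (sqnorm n x))"
    by (simp add: distr_distr comp_def)
  also have "\<dots> = density ?K (\<lambda>y. ennreal (ggb_transformed_density k n \<sigma> h' y))"
    unfolding law_X ggb_density_cong[OF h', symmetric]
    by (rule distr_ggb_density_ratio_coords) (use assms(3-5) h' in auto)
  also have "\<dots> = density ?K (\<lambda>y. ennreal (ggb_transformed_density k n \<sigma> h y))"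
    by (simp only: ggb_transformed_density_cong[OF h'])
  moreover have "(\<lambda>y. ennreal (ggb_transformed_density k n \<sigma> h y)) \<in> borel_measurable ?K"
    unfolding ggb_transformed_density_cong[OF h', symmetric] by measurable
  ultimately show ?thesis
    unfolding ratio_coords_def by (simp add: distributed_def)
qed

end
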